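(* Let $G=(V,E)$ be a strongly biconnected directed graph and let $U_1,U_2$ be two distinct $2$-edge-biconnected blocks of $G$. Then $|U_1\cap U_2|\le 1$.
   Context: All graphs are finite. A directed graph $H$ is strongly biconnected if $H$ is strongly connected and its underlying undirected graph is biconnected. A strongly biconnected component of a directed graph $H=(W,F)$ is a maximal vertex subset $C\subseteq W$ such that the induced subgraph $H[C]$ is strongly biconnected. For a strongly biconnected directed graph $G=(V,E)$ and an edge $b\in E$, $G\setminus\{b\}=(V,E\setminus\{b\})$. For distinct $x,y\in V$, write $x \overset{e}{\leftrightsquigarrow} y$ if for every edge $b\in E$ there is a strongly biconnected component of $G\setminus\{b\}$ containing both $x$ and $y$. A $2$-edge-biconnected block of $G$ is a maximal vertex subset $U\subseteq V$ with $|U|>1$ such that $x \overset{e}{\leftrightsquigarrow} y$ for all distinct $x,y\in U$. *)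

theory Defs
  imports Main
begin

definition digraph :: "'a set \<Rightarrow> ('a \<times> 'a) set \<Rightarrow> bool" where
  "digraph V E \<longleftrightarrow> finite V \<and> E \<subseteq> V \<times> V"

definition strongly_connected :: "'a set \<Rightarrow> ('a \<times> 'a) set \<Rightarrow> bool" where
  "strongly_connected W F \<longleftrightarrow> W \<noteq> {} \<and>
     (\<forall>x\<in>W. \<forall>y\<in>W. (x, y) \<in> (F \<inter> (W \<times> W))\<^sup>*)"

definition und_connected :: "'a set \<Rightarrow> ('a \<times> 'a) set \<Rightarrow> bool" where
  "und_connected W F \<longleftrightarrow> W \<noteq> {} \<and>
     (\<forall>x\<in>W. \<forall>y\<in>W. (x, y) \<in> ((F \<inter> (W \<times> W)) \<union> (F \<inter> (W \<times> W))\<inverse>)\<^sup>*)"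

definition und_biconnected :: "'a set \<Rightarrow> ('a \<times> 'a) set \<Rightarrow> bool" where
  "und_biconnected W F \<longleftrightarrow> und_connected W F \<and>
     (\<forall>v\<in>W. W - {v} \<noteq> {} \<longrightarrow> und_connected (W - {v}) F)"

definition strongly_biconnected :: "'a set \<Rightarrow> ('a \<times> 'a) set \<Rightarrow> bool" where
  "strongly_biconnected W F \<longleftrightarrow> strongly_connected W F \<and> und_biconnected W F"

definition sb_component :: "'a set \<Rightarrow> ('a \<times> 'a) set \<Rightarrow> 'a set \<Rightarrow> bool" where
  "sb_component W F C \<longleftrightarrow> C \<subseteq> W \<and> strongly_biconnected C F \<and>
     (\<forall>D. C \<subset> D \<and> D \<subseteq> W \<longrightarrow> \<not> strongly_biconnected D F)"

definition e_rel :: "'a set \<Rightarrow> ('a \<times> 'a) set \<Rightarrow> 'a \<Rightarrow> 'a \<Rightarrow> bool" where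
  "e_rel V E x y \<longleftrightarrow> (\<forall>b\<in>E. \<exists>C. sb_component V (E - {b}) C \<and> x \<in> C \<and> y \<in> C)"

definition e_rel_set :: "'a set \<Rightarrow> ('a \<times> 'a) set \<Rightarrow> 'a set \<Rightarrow> bool" where
  "e_rel_set V E U \<longleftrightarrow> U \<subseteq> V \<and> 1 < card U \<and>
     (\<forall>x\<in>U. \<forall>y\<in>U. x \<noteq> y \<longrightarrow> e_rel V E x y)"

definition two_edge_biconnected_block :: "'a set \<Rightarrow> ('a \<times> 'a) set \<Rightarrow> 'a set \<Rightarrow> bool" where
  "two_edge_biconnected_block V E U \<longleftrightarrow> e_rel_set V E U \<and>
     (\<forall>U'. U \<subset> U' \<and> e_rel_set V E U' \<longrightarrow> False)"

end

theory Submission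
  imports Defs
begin

text \<open>Strongly biconnected subgraphs that share two vertices have a strongly biconnected
  union, and so do three of them that pairwise share distinct vertices (a triangle).
  Hence the strongly biconnected component of \<open>G - b\<close> through two vertices of a block
  \<open>U\<close> contains every vertex of \<open>U\<close>. If \<open>U\<^sub>1\<close> and \<open>U\<^sub>2\<close> share two vertices \<open>z \<noteq> w\<close>,
  then for every edge \<open>b\<close> the components through \<open>{x, z, w}\<close> and \<open>{y, z, w}\<close>, with
  \<open>x \<in> U\<^sub>1\<close> and \<open>y \<in> U\<^sub>2\<close>, coincide; so \<open>U\<^sub>1 \<union> U\<^sub>2\<close> is itself related and maximality forces
  \<open>U\<^sub>1 = U\<^sub>2\<close>.\<close>

lemma und_connected_iff_strongly_connected:
  "und_connected W F \<longleftrightarrow> strongly_connected W (F \<union> F\<inverse>)"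
proof -
  have "(F \<union> F\<inverse>) \<inter> W \<times> W = (F \<inter> W \<times> W) \<union> (F \<inter> W \<times> W)\<inverse>" by blast
  then show ?thesis unfolding und_connected_def strongly_connected_def by simp
qed

lemma strongly_connected_Un:
  assumes "strongly_connected A F" "strongly_connected B F" "a \<in> A" "a \<in> B"
  shows "strongly_connected (A \<union> B) F"
proof -
  have reach: "(x, y) \<in> (F \<inter> (A \<union> B) \<times> (A \<union> B))\<^sup>*"
    if "strongly_connected C F" "C \<subseteq> A \<union> B" "x \<in> C" "y \<in> C" for C x y
  proof -
    have "F \<inter> C \<times> C \<subseteq> F \<inter> (A \<union> B) \<times> (A \<union> B)" using \<open>C \<subseteq> A \<union> B\<close> by blast
    with that show ?thesis unfolding strongly_connected_def by (meson rtrancl_mono subsetD)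
  qed
  have "(x, y) \<in> (F \<inter> (A \<union> B) \<times> (A \<union> B))\<^sup>*" if "x \<in> A \<union> B" "y \<in> A \<union> B" for x y
  proof -
    have "(x, a) \<in> (F \<inter> (A \<union> B) \<times> (A \<union> B))\<^sup>*" "(a, y) \<in> (F \<inter> (A \<union> B) \<times> (A \<union> B))\<^sup>*"
      using that assms reach[of A] reach[of B] by blast+
    then show ?thesis by simp
  qed
  then show ?thesis using assms(3) unfolding strongly_connected_def by blast
qed

lemma und_connected_Un:
  "\<lbrakk>und_connected A F; und_connected B F; a \<in> A; a \<in> B\<rbrakk> \<Longrightarrow> und_connected (A \<union> B) F"
  unfolding und_connected_iff_strongly_connected by (rule strongly_connected_Un)

lemma und_biconnected_Diff_singleton:
  assumes "und_biconnected C F" "c \<in> C" "c \<noteq> v"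
  shows "und_connected (C - {v}) F"
proof (cases "v \<in> C")
  case True
  then show ?thesis using assms unfolding und_biconnected_def by blast
next
  case False
  then show ?thesis using assms unfolding und_biconnected_def by simp
qed

lemma und_biconnected_Un_Diff_singleton:
  assumes "und_biconnected A F" "und_biconnected B F" "a \<in> A" "a \<in> B" "a \<noteq> v"
  shows "und_connected (A \<union> B - {v}) F"
proof -
  have "und_connected ((A - {v}) \<union> (B - {v})) F"
    using assms by (intro und_connected_Un und_biconnected_Diff_singleton) auto
  moreover have "(A - {v}) \<union> (B - {v}) = A \<union> B - {v}" by blast
  ultimately show ?thesis by simp
qed

lemma strongly_biconnected_Un:
  assumes "strongly_biconnected A F" "strongly_biconnected B F"
    and "a \<in> A" "a \<in> B" "a' \<in> A" "a' \<in> B" "a \<noteq> a'"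
  shows "strongly_biconnected (A \<union> B) F"
proof -
  have sc: "strongly_connected A F" "strongly_connected B F"
    and bc: "und_biconnected A F" "und_biconnected B F"
    using assms(1,2) unfolding strongly_biconnected_def by auto
  have "und_connected (A \<union> B - {v}) F" for v
  proof (cases "v = a")
    case True
    then show ?thesis using assms(5-7) by (intro und_biconnected_Un_Diff_singleton[OF bc]) auto
  next
    case False
    then show ?thesis using assms(3,4) by (intro und_biconnected_Un_Diff_singleton[OF bc]) auto
  qed
  moreover have "und_connected (A \<union> B) F"
    using bc assms(3,4) unfolding und_biconnected_def by (blast intro: und_connected_Un)
  ultimately show ?thesis
    using strongly_connected_Un[OF sc assms(3,4)]
    unfolding strongly_biconnected_def und_biconnected_def by blast
qed

lemma strongly_biconnected_triangle:
  assumes "strongly_biconnected A F" "strongly_biconnected B F" "strongly_biconnected C F"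
    and "z \<in> A" "z \<in> B" "w \<in> B" "w \<in> C" "x \<in> C" "x \<in> A"
    and "x \<noteq> z" "x \<noteq> w" "z \<noteq> w"
  shows "strongly_biconnected (A \<union> B \<union> C) F"
proof -
  have sc: "strongly_connected A F" "strongly_connected B F" "strongly_connected C F"
    and bc: "und_biconnected A F" "und_biconnected B F" "und_biconnected C F"
    using assms(1-3) unfolding strongly_biconnected_def by auto
  have "strongly_connected (A \<union> B \<union> C) F"
    using assms(4-7) by (intro strongly_connected_Un[OF _ sc(3)] strongly_connected_Un[OF sc(1,2)]) auto
  moreover have "und_connected (A \<union> B \<union> C) F"
    using bc assms(4-7) unfolding und_biconnected_def by (blast intro: und_connected_Un)
  moreover have "und_connected (A \<union> B \<union> C - {v}) F" for v
  proof (cases "v = z")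
    case True
    \<comment> \<open>the path \<open>B - w - C - x - A\<close> avoids \<open>z\<close>\<close>
    have "und_connected (B \<union> C - {v} \<union> (A - {v})) F"
      using True assms(4-12)
      by (intro und_connected_Un[of _ _ _ x] und_biconnected_Un_Diff_singleton[OF bc(2,3), of w]
          und_biconnected_Diff_singleton[OF bc(1), of x]) auto
    moreover have "B \<union> C - {v} \<union> (A - {v}) = A \<union> B \<union> C - {v}" by blast
    ultimately show ?thesis by simp
  next
    case False
    obtain c where "c \<in> C" "c \<in> A \<union> B" "c \<noteq> v"
      using assms(6-9,11) by blast
    then have "und_connected (A \<union> B - {v} \<union> (C - {v})) F"
      using False assms(4,5)
      by (intro und_connected_Un[of _ _ _ c] und_biconnected_Un_Diff_singleton[OF bc(1,2), of z]
          und_biconnected_Diff_singleton[OF bc(3), of c]) auto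
    moreover have "A \<union> B - {v} \<union> (C - {v}) = A \<union> B \<union> C - {v}" by blast
    ultimately show ?thesis by simp
  qed
  ultimately show ?thesis unfolding strongly_biconnected_def und_biconnected_def by blast
qed

lemma sb_component_maximal:
  "\<lbrakk>sb_component W F C; strongly_biconnected D F; D \<subseteq> W; C \<subseteq> D\<rbrakk> \<Longrightarrow> C = D"
  unfolding sb_component_def by blast

lemma sb_componentD:
  assumes "sb_component W F C"
  shows sb_component_subset: "C \<subseteq> W"
    and sb_component_strongly_biconnected: "strongly_biconnected C F"
  using assms unfolding sb_component_def by simp_all

lemma sb_component_absorbs:
  assumes "sb_component W F C" "sb_component W F D" "z \<in> C" "z \<in> D" "w \<in> C" "w \<in> D" "z \<noteq> w"
  shows "D \<subseteq> C"
proof -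
  have "strongly_biconnected (C \<union> D) F" "C \<union> D \<subseteq> W"
    using assms sb_component_subset[OF assms(1)] sb_component_subset[OF assms(2)]
    by (auto intro: strongly_biconnected_Un sb_component_strongly_biconnected)
  then show ?thesis using sb_component_maximal[OF assms(1)] by blast
qed

lemma e_rel_sym: "e_rel V E x y \<Longrightarrow> e_rel V E y x"
  unfolding e_rel_def by blast

lemma e_rel_set_common_component:
  assumes "e_rel_set V E U" "x \<in> U" "z \<in> U" "w \<in> U" "z \<noteq> w" "b \<in> E"
  shows "\<exists>C. sb_component V (E - {b}) C \<and> x \<in> C \<and> z \<in> C \<and> w \<in> C"
proof -
  have through: "\<exists>C. sb_component V (E - {b}) C \<and> p \<in> C \<and> q \<in> C"
    if "p \<in> U" "q \<in> U" "p \<noteq> q" for p q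
  proof -
    have "e_rel V E p q" using assms(1) that unfolding e_rel_set_def by blast
    then show ?thesis using assms(6) unfolding e_rel_def by blast
  qed
  obtain B where B: "sb_component V (E - {b}) B" "z \<in> B" "w \<in> B"
    using through[OF assms(3-5)] by blast
  show ?thesis
  proof (cases "x = z \<or> x = w")
    case True
    then show ?thesis using B by auto
  next
    case False
    obtain A where A: "sb_component V (E - {b}) A" "x \<in> A" "z \<in> A"
      using through[OF assms(2,3)] False by blast
    obtain C where C: "sb_component V (E - {b}) C" "x \<in> C" "w \<in> C"
      using through[OF assms(2,4)] False by blast
    have "strongly_biconnected (A \<union> B \<union> C) (E - {b})"
      using A B C False assms(5)
      by (intro strongly_biconnected_triangle[of A _ B C z w x] sb_component_strongly_biconnected)
        auto
    moreover have "A \<union> B \<union> C \<subseteq> V" using A B C by (auto dest: sb_component_subset)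
    ultimately have "A = A \<union> B \<union> C" using sb_component_maximal[OF A(1)] by blast
    then show ?thesis using A B by blast
  qed
qed

lemma e_rel_set_Un:
  assumes "e_rel_set V E U\<^sub>1" "e_rel_set V E U\<^sub>2"
    and "z \<in> U\<^sub>1 \<inter> U\<^sub>2" "w \<in> U\<^sub>1 \<inter> U\<^sub>2" "z \<noteq> w"
  shows "e_rel_set V E (U\<^sub>1 \<union> U\<^sub>2)"
proof -
  have cross: "e_rel V E x y" if "x \<in> U\<^sub>1" "y \<in> U\<^sub>2" for x y
    unfolding e_rel_def
  proof
    fix b assume "b \<in> E"
    obtain K\<^sub>1 where K\<^sub>1: "sb_component V (E - {b}) K\<^sub>1" "x \<in> K\<^sub>1" "z \<in> K\<^sub>1" "w \<in> K\<^sub>1"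
      using e_rel_set_common_component[OF assms(1) \<open>x \<in> U\<^sub>1\<close> _ _ assms(5) \<open>b \<in> E\<close>] assms(3,4)
      by blast
    obtain K\<^sub>2 where K\<^sub>2: "sb_component V (E - {b}) K\<^sub>2" "y \<in> K\<^sub>2" "z \<in> K\<^sub>2" "w \<in> K\<^sub>2"
      using e_rel_set_common_component[OF assms(2) \<open>y \<in> U\<^sub>2\<close> _ _ assms(5) \<open>b \<in> E\<close>] assms(3,4)
      by blast
    have "K\<^sub>2 \<subseteq> K\<^sub>1" using sb_component_absorbs[OF K\<^sub>1(1) K\<^sub>2(1)] K\<^sub>1 K\<^sub>2 assms(5) by blast
    then show "\<exists>C. sb_component V (E - {b}) C \<and> x \<in> C \<and> y \<in> C" using K\<^sub>1 K\<^sub>2 by blast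
  qed
  have rel: "\<forall>x\<in>U\<^sub>i. \<forall>y\<in>U\<^sub>i. x \<noteq> y \<longrightarrow> e_rel V E x y" if "e_rel_set V E U\<^sub>i" for U\<^sub>i
    using that unfolding e_rel_set_def by simp
  have "e_rel V E x y" if "x \<in> U\<^sub>1 \<union> U\<^sub>2" "y \<in> U\<^sub>1 \<union> U\<^sub>2" "x \<noteq> y" for x y
    using that rel[OF assms(1)] rel[OF assms(2)] cross[of x y] cross[of y x] e_rel_sym[of V E y x]
    by auto
  moreover have "1 < card (U\<^sub>1 \<union> U\<^sub>2)"
  proof -
    have "1 < card U\<^sub>1" "1 < card U\<^sub>2" using assms(1,2) unfolding e_rel_set_def by simp_all
    then have "finite (U\<^sub>1 \<union> U\<^sub>2)" by (simp add: card_ge_0_finite)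
    with \<open>1 < card U\<^sub>1\<close> show ?thesis by (meson card_mono order_less_le_trans sup_ge1)
  qed
  moreover have "U\<^sub>1 \<union> U\<^sub>2 \<subseteq> V" using assms(1,2) unfolding e_rel_set_def by simp
  ultimately show ?thesis unfolding e_rel_set_def by blast
qed

lemma two_edge_biconnected_block_maximal:
  "\<lbrakk>two_edge_biconnected_block V E U; e_rel_set V E U'; U \<subseteq> U'\<rbrakk> \<Longrightarrow> U = U'"
  unfolding two_edge_biconnected_block_def by blast

theorem mainTheorem2:
  assumes "digraph V E"
    and "strongly_biconnected V E"
    and "two_edge_biconnected_block V E U1"
    and "two_edge_biconnected_block V E U2"
    and "U1 \<noteq> U2"
  shows "card (U1 \<inter> U2) \<le> 1"
proof (rule ccontr)
  assume "\<not> card (U1 \<inter> U2) \<le> 1"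
  then obtain z w where "z \<in> U1 \<inter> U2" "w \<in> U1 \<inter> U2" "z \<noteq> w"
    using card_le_Suc0_iff_eq[of "U1 \<inter> U2"] card.infinite[of "U1 \<inter> U2"] by fastforce
  moreover have "e_rel_set V E U1" "e_rel_set V E U2"
    using assms(3,4) unfolding two_edge_biconnected_block_def by auto
  ultimately have "e_rel_set V E (U1 \<union> U2)" by (rule e_rel_set_Un[rotated 2])
  then have "U1 = U1 \<union> U2" "U2 = U1 \<union> U2"
    using two_edge_biconnected_block_maximal assms(3,4) by blast+
  with assms(5) show False by simp
qed

end
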